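(* Let $\beta\ge 2$ and let $Z_1,Z_2$ be finite sets with $Z_1\cap Z_2=\{u\}$. Let $\alpha_1:Z_1\to T_1$ and $\alpha_2:Z_2\to T_2$ be maps of $Z_1$, $Z_2$ to the leaves of $\beta$-HSTs $T_1,T_2$. Then there exist a $\beta$-HST $T$ and a map $\alpha:Z_1\cup Z_2\to T$ (to leaves of $T$) such that $d_\alpha(x,y)=d_{\alpha_1}(x,y)$ for all $x,y\in Z_1$, $d_\alpha(x,y)=d_{\alpha_2}(x,y)$ for all $x,y\in Z_2$, and $d_\alpha(x,y)\ge\max\{d_{\alpha_1}(x,u),d_{\alpha_2}(u,y)\}$ for all $x\in Z_1$, $y\in Z_2$. (That is, $\beta$-HSTs admit a perfect merge function.)
   Context: A $\beta$-HST is a metric on points mapped to the leaves of a rooted tree whose nodes $v$ carry values $\eta_v$ with $\eta_v=\beta\,\eta_u$ whenever $u$ is a child of $v$ and $\eta_v=1/\beta$ for every leaf $v$; the distance between two points is $\eta_z$ where $z$ is the least common ancestor of their leaves. For a map $\alpha$ into a $\beta$-HST, $d_\alpha(x,y)$ denotes the HST distance between the images of $x$ and $y$. *)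

theory Defs
  imports Main "HOL.Real"
begin

record 'v hst =
  nodes :: "'v set"
  edges :: "('v \<times> 'v) set"   \<comment> \<open>(u, v) \<in> edges: u is a child of v\<close>
  root  :: 'v
  eta   :: "'v \<Rightarrow> real"

definition rooted_tree :: "'v set \<Rightarrow> ('v \<times> 'v) set \<Rightarrow> 'v \<Rightarrow> bool" where
  "rooted_tree V E r \<longleftrightarrow>
     finite V \<and> r \<in> V \<and> E \<subseteq> V \<times> V \<and> (\<forall>w. (r, w) \<notin> E) \<and>
     (\<forall>v\<in>V. v \<noteq> r \<longrightarrow> (\<exists>!w. (v, w) \<in> E)) \<and>
     (\<forall>v\<in>V. (v, r) \<in> E\<^sup>*)"

definition is_leaf :: "'v hst \<Rightarrow> 'v \<Rightarrow> bool" where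
  "is_leaf T v \<longleftrightarrow> v \<in> nodes T \<and> (\<forall>u. (u, v) \<notin> edges T)"

definition is_HST :: "real \<Rightarrow> 'v hst \<Rightarrow> bool" where
  "is_HST \<beta> T \<longleftrightarrow>
     rooted_tree (nodes T) (edges T) (root T) \<and>
     (\<forall>u v. (u, v) \<in> edges T \<longrightarrow> eta T v = \<beta> * eta T u) \<and>
     (\<forall>v. is_leaf T v \<longrightarrow> eta T v = 1 / \<beta>)"

definition is_lca :: "'v hst \<Rightarrow> 'v \<Rightarrow> 'v \<Rightarrow> 'v \<Rightarrow> bool" where
  "is_lca T a b z \<longleftrightarrow>
     (a, z) \<in> (edges T)\<^sup>* \<and> (b, z) \<in> (edges T)\<^sup>* \<and>
     (\<forall>w. (a, w) \<in> (edges T)\<^sup>* \<and> (b, w) \<in> (edges T)\<^sup>* \<longrightarrow> (z, w) \<in> (edges T)\<^sup>*)"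

definition hst_dist :: "'v hst \<Rightarrow> 'v \<Rightarrow> 'v \<Rightarrow> real" where
  "hst_dist T a b = eta T (THE z. is_lca T a b z)"

definition d_map :: "'v hst \<Rightarrow> ('a \<Rightarrow> 'v) \<Rightarrow> 'a \<Rightarrow> 'a \<Rightarrow> real" where
  "d_map T \<alpha> x y = hst_dist T (\<alpha> x) (\<alpha> y)"

end

theory Submission
  imports Defs "HOL-Library.Nat_Bijection"
begin

(* In a beta-HST with beta > 1 the value eta grows by the factor beta
   along every edge and equals 1/beta at the leaves, so all leaves lie at the same depth
   and two leaves have distance beta^k / beta, where k is the height of their least common
   ancestor.  This height is a natural-number valued ultrametric on the leaves.  Conversely,
   every finite natural-number valued pseudo-ultrametric L is realised by a beta-HST whose
   nodes of level k are the balls {y. L x y \<le> k}.  Gluing the two ultrametrics coming from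
   T1 and T2 at the common point u, with level max (L1 x u) (L2 u y) between x \<in> Z1 and
   y \<in> Z2, again yields an ultrametric, and the beta-HST realising it is the merge. *)

section \<open>Pseudo-ultrametrics and gluing at a point\<close>

definition pseudo_ultrametric_on :: "'a set \<Rightarrow> ('a \<Rightarrow> 'a \<Rightarrow> 'b::{zero,linorder}) \<Rightarrow> bool" where
  "pseudo_ultrametric_on S d \<longleftrightarrow>
     (\<forall>x\<in>S. d x x = 0) \<and> (\<forall>x\<in>S. \<forall>y\<in>S. d x y = d y x) \<and>
     (\<forall>x\<in>S. \<forall>y\<in>S. \<forall>z\<in>S. d x z \<le> max (d x y) (d y z))"

lemma pseudo_ultrametric_on_compose:
  "pseudo_ultrametric_on S d \<Longrightarrow> f ` A \<subseteq> S \<Longrightarrow> pseudo_ultrametric_on A (\<lambda>x y. d (f x) (f y))"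
  unfolding pseudo_ultrametric_on_def by (simp add: image_subset_iff)

lemma pseudo_ultrametric_on_nonneg:
  "pseudo_ultrametric_on S d \<Longrightarrow> x \<in> S \<Longrightarrow> y \<in> S \<Longrightarrow> 0 \<le> d x y"
  unfolding pseudo_ultrametric_on_def by (metis max.idem)

lemma pseudo_ultrametric_on_le_trans:
  assumes "pseudo_ultrametric_on S d" "x \<in> S" "y \<in> S" "z \<in> S" "d x y \<le> k" "d y z \<le> k"
  shows "d x z \<le> k"
  using assms unfolding pseudo_ultrametric_on_def by (metis max.bounded_iff order_trans)

definition glue_at :: "'a set \<Rightarrow> ('a \<Rightarrow> 'a \<Rightarrow> 'b::linorder) \<Rightarrow> 'a set \<Rightarrow> ('a \<Rightarrow> 'a \<Rightarrow> 'b) \<Rightarrow> 'a \<Rightarrow> 'a \<Rightarrow> 'a \<Rightarrow> 'b" where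
  "glue_at S1 d1 S2 d2 u x y =
     (if x \<in> S1 \<and> y \<in> S1 then d1 x y
      else if x \<in> S2 \<and> y \<in> S2 then d2 x y
      else if x \<in> S1 then max (d1 x u) (d2 u y)
      else max (d1 y u) (d2 u x))"

context
  fixes S1 S2 :: "'a set" and d1 d2 :: "'a \<Rightarrow> 'a \<Rightarrow> 'b::{zero,linorder}" and u :: 'a
  assumes pu1: "pseudo_ultrametric_on S1 d1" and pu2: "pseudo_ultrametric_on S2 d2"
    and inter: "S1 \<inter> S2 = {u}"
begin

lemma glue_point_mem: "u \<in> S1" "u \<in> S2"
  using inter by auto

lemma glue_at_left: "x \<in> S1 \<Longrightarrow> y \<in> S1 \<Longrightarrow> glue_at S1 d1 S2 d2 u x y = d1 x y"
  by (simp add: glue_at_def)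

lemma glue_at_commute:
  "x \<in> S1 \<union> S2 \<Longrightarrow> y \<in> S1 \<union> S2 \<Longrightarrow> glue_at S1 d1 S2 d2 u x y = glue_at S1 d1 S2 d2 u y x"
  using pu1 pu2 unfolding glue_at_def pseudo_ultrametric_on_def by auto

lemma glue_at_right:
  assumes "x \<in> S2" "y \<in> S2"
  shows "glue_at S1 d1 S2 d2 u x y = d2 x y"
proof (cases "x \<in> S1 \<and> y \<in> S1")
  case True
  with assms inter have "x = u" "y = u" by auto
  with pu1 pu2 glue_point_mem show ?thesis unfolding glue_at_def pseudo_ultrametric_on_def by simp
qed (use assms in \<open>auto simp: glue_at_def\<close>)

lemma glue_at_cross:
  assumes "x \<in> S1" "y \<in> S2"
  shows "glue_at S1 d1 S2 d2 u x y = max (d1 x u) (d2 u y)"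
proof -
  note u = glue_point_mem
  consider "y = u" | "x = u" "y \<notin> S1" | "x \<notin> S2" "y \<notin> S1" using assms inter by blast
  then show ?thesis
  proof cases
    case 1
    with assms u pu2 pseudo_ultrametric_on_nonneg[OF pu1] show ?thesis
      unfolding glue_at_def pseudo_ultrametric_on_def by (simp add: max_absorb1)
  next
    case 2
    with assms u pu1 pseudo_ultrametric_on_nonneg[OF pu2] show ?thesis
      unfolding glue_at_def pseudo_ultrametric_on_def by (auto simp: max_absorb2)
  qed (use assms in \<open>simp add: glue_at_def\<close>)
qed

lemma glue_at_ultra_left:
  assumes "a \<in> S1" "b \<in> S1" "c \<in> S1 \<union> S2"
  shows "glue_at S1 d1 S2 d2 u a b \<le> max (glue_at S1 d1 S2 d2 u a c) (glue_at S1 d1 S2 d2 u c b)"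
proof (cases "c \<in> S1")
  case True
  with assms pu1 have "d1 a b \<le> max (d1 a c) (d1 c b)"
    unfolding pseudo_ultrametric_on_def by blast
  with assms True show ?thesis by (simp add: glue_at_left)
next
  case False
  with assms have "c \<in> S2" by blast
  have "d1 a b \<le> max (d1 a u) (d1 u b)" "d1 u b = d1 b u"
    using pu1 assms glue_point_mem unfolding pseudo_ultrametric_on_def by blast+
  moreover have "glue_at S1 d1 S2 d2 u a c = max (d1 a u) (d2 u c)" "glue_at S1 d1 S2 d2 u c b = max (d1 b u) (d2 u c)"
    using assms \<open>c \<in> S2\<close> glue_at_cross glue_at_commute[of c b] by auto
  ultimately show ?thesis using assms by (auto simp: glue_at_left le_max_iff_disj)
qed

lemma glue_at_ultra_right:
  assumes "a \<in> S2" "b \<in> S2" "c \<in> S1 \<union> S2"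
  shows "glue_at S1 d1 S2 d2 u a b \<le> max (glue_at S1 d1 S2 d2 u a c) (glue_at S1 d1 S2 d2 u c b)"
proof (cases "c \<in> S2")
  case True
  with assms pu2 have "d2 a b \<le> max (d2 a c) (d2 c b)"
    unfolding pseudo_ultrametric_on_def by blast
  with assms True show ?thesis by (simp add: glue_at_right)
next
  case False
  with assms have "c \<in> S1" by blast
  have "d2 a b \<le> max (d2 a u) (d2 u b)" "d2 a u = d2 u a"
    using pu2 assms glue_point_mem unfolding pseudo_ultrametric_on_def by blast+
  moreover have "glue_at S1 d1 S2 d2 u a c = max (d1 c u) (d2 u a)" "glue_at S1 d1 S2 d2 u c b = max (d1 c u) (d2 u b)"
    using assms \<open>c \<in> S1\<close> glue_at_cross glue_at_commute[of a c] by auto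
  ultimately show ?thesis using assms by (auto simp: glue_at_right le_max_iff_disj)
qed

lemma glue_at_ultra_cross:
  assumes "a \<in> S1" "b \<in> S2" "c \<in> S1 \<union> S2"
  shows "glue_at S1 d1 S2 d2 u a b \<le> max (glue_at S1 d1 S2 d2 u a c) (glue_at S1 d1 S2 d2 u c b)"
proof (cases "c \<in> S1")
  case True
  have "d1 a u \<le> max (d1 a c) (d1 c u)"
    using pu1 assms True glue_point_mem unfolding pseudo_ultrametric_on_def by blast
  then have "max (d1 a u) (d2 u b) \<le> max (max (d1 a c) (d1 c u)) (d2 u b)"
    by (rule max.mono) simp
  with assms True show ?thesis by (simp add: glue_at_cross glue_at_left max.assoc)
next
  case False
  with assms have "c \<in> S2" by blast
  have "d2 u b \<le> max (d2 u c) (d2 c b)"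
    using pu2 assms \<open>c \<in> S2\<close> glue_point_mem unfolding pseudo_ultrametric_on_def by blast
  then have "max (d1 a u) (d2 u b) \<le> max (d1 a u) (max (d2 u c) (d2 c b))"
    by (rule max.mono[OF order_refl])
  with assms \<open>c \<in> S2\<close> show ?thesis by (simp add: glue_at_cross glue_at_right max.assoc)
qed

lemma pseudo_ultrametric_on_glue_at: "pseudo_ultrametric_on (S1 \<union> S2) (glue_at S1 d1 S2 d2 u)"
proof -
  let ?d = "glue_at S1 d1 S2 d2 u"
  have "?d x z \<le> max (?d x y) (?d y z)"
    if xyz: "x \<in> S1 \<union> S2" "y \<in> S1 \<union> S2" "z \<in> S1 \<union> S2" for x y z
  proof -
    consider "x \<in> S1" "z \<in> S1" | "x \<in> S2" "z \<in> S2" | "x \<in> S1" "z \<in> S2" | "x \<in> S2" "z \<in> S1"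
      using xyz by blast
    then show ?thesis
    proof cases
      case 4
      have "?d x z = ?d z x" using glue_at_commute xyz by blast
      also have "\<dots> \<le> max (?d z y) (?d y x)" using glue_at_ultra_cross 4 xyz by blast
      also have "\<dots> = max (?d x y) (?d y z)"
        using glue_at_commute[of z y] glue_at_commute[of y x] xyz by (simp add: max.commute)
      finally show ?thesis .
    qed (use glue_at_ultra_left glue_at_ultra_right glue_at_ultra_cross xyz in blast)+
  qed
  moreover have "?d x x = 0" if "x \<in> S1 \<union> S2" for x
    using that pu1 pu2 unfolding pseudo_ultrametric_on_def by (auto simp: glue_at_left glue_at_right)
  ultimately show ?thesis
    unfolding pseudo_ultrametric_on_def using glue_at_commute by blast
qed

end

section \<open>Heights of least common ancestors in a \<open>\<beta>\<close>-HST\<close>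

lemma single_valued_relpow_factor:
  assumes "single_valued E" "(x, y) \<in> E ^^ i" "(x, z) \<in> E ^^ j" "i \<le> j"
  shows "(y, z) \<in> E ^^ (j - i)"
proof -
  from assms(3,4) have "(x, z) \<in> E ^^ i O E ^^ (j - i)"
    by (simp add: relpow_add[symmetric])
  then obtain y' where "(x, y') \<in> E ^^ i" "(y', z) \<in> E ^^ (j - i)" by blast
  moreover have "y' = y"
    using single_valued_relpow[OF assms(1)] \<open>(x, y') \<in> E ^^ i\<close> assms(2) by (rule single_valuedD)
  ultimately show ?thesis by simp
qed

lemma rooted_tree_single_valued:
  assumes "rooted_tree V E r"
  shows "single_valued E"
proof (rule single_valuedI)
  fix x y z assume "(x, y) \<in> E" "(x, z) \<in> E"
  moreover from assms \<open>(x, y) \<in> E\<close> have "x \<in> V" "x \<noteq> r" unfolding rooted_tree_def by auto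
  ultimately show "y = z" using assms unfolding rooted_tree_def by blast
qed

lemma HST_single_valued: "is_HST \<beta> T \<Longrightarrow> single_valued (edges T)"
  unfolding is_HST_def by (blast intro: rooted_tree_single_valued)

lemma HST_eta_relpow:
  assumes "is_HST \<beta> T" "(x, y) \<in> edges T ^^ k"
  shows "eta T y = \<beta> ^ k * eta T x"
  using assms(2)
proof (induction k arbitrary: y)
  case (Suc k)
  from Suc.prems obtain y' where "(x, y') \<in> edges T ^^ k" "(y', y) \<in> edges T" by (rule relpow_Suc_E)
  with Suc.IH assms(1) show ?case unfolding is_HST_def by simp
qed simp

lemma HST_leaf_depth_unique:
  assumes "is_HST \<beta> T" "\<beta> > 1" "is_leaf T a" "is_leaf T b"
    and "(a, z) \<in> edges T ^^ i" "(b, z) \<in> edges T ^^ j"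
  shows "i = j"
proof -
  have "eta T a = 1 / \<beta>" "eta T b = 1 / \<beta>" using assms(1,3,4) unfolding is_HST_def by auto
  with HST_eta_relpow[OF assms(1,5)] HST_eta_relpow[OF assms(1,6)] assms(2)
  have "\<beta> ^ i = \<beta> ^ j" by simp
  with assms(2) show ?thesis by (simp add: power_inject_exp)
qed

lemma HST_leaf_ancestors_antisym:
  assumes "is_HST \<beta> T" "\<beta> > 1" "is_leaf T a" "(a, z) \<in> (edges T)\<^sup>*"
    and "(z, z') \<in> (edges T)\<^sup>*" "(z', z) \<in> (edges T)\<^sup>*"
  shows "z = z'"
proof -
  obtain k p q where "(a, z) \<in> edges T ^^ k" "(z, z') \<in> edges T ^^ p" "(z', z) \<in> edges T ^^ q"
    using assms(4-6) by (meson rtrancl_power)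
  then have "(a, z) \<in> edges T ^^ (k + (p + q))" by (auto simp: relpow_add)
  with \<open>(a, z) \<in> edges T ^^ k\<close> have "k + (p + q) = k"
    using HST_leaf_depth_unique[OF assms(1-3,3)] by blast
  with \<open>(z, z') \<in> edges T ^^ p\<close> show ?thesis by simp
qed

definition lca_height :: "'v hst \<Rightarrow> 'v \<Rightarrow> 'v \<Rightarrow> nat" where
  "lca_height T a b = (LEAST k. \<exists>z. (a, z) \<in> edges T ^^ k \<and> (b, z) \<in> edges T ^^ k)"

lemma lca_height_le:
  "(a, z) \<in> edges T ^^ k \<Longrightarrow> (b, z) \<in> edges T ^^ k \<Longrightarrow> lca_height T a b \<le> k"
  unfolding lca_height_def by (blast intro: Least_le)

lemma lca_height_commute: "lca_height T a b = lca_height T b a"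
  unfolding lca_height_def by (simp add: conj_commute)

lemma lca_height_same [simp]: "lca_height T a a = 0"
  using lca_height_le[where a = a and b = a and z = a and k = 0] by simp

lemma HST_lca_height_ancestor:
  assumes "is_HST \<beta> T" "\<beta> > 1" "is_leaf T a" "is_leaf T b"
  obtains z where "(a, z) \<in> edges T ^^ lca_height T a b" "(b, z) \<in> edges T ^^ lca_height T a b"
proof -
  have "(a, root T) \<in> (edges T)\<^sup>*" "(b, root T) \<in> (edges T)\<^sup>*"
    using assms(1,3,4) unfolding is_HST_def rooted_tree_def is_leaf_def by auto
  then obtain i j where "(a, root T) \<in> edges T ^^ i" "(b, root T) \<in> edges T ^^ j"
    by (meson rtrancl_power)
  moreover from calculation have "i = j" using HST_leaf_depth_unique[OF assms] by blast
  ultimately have "\<exists>k z. (a, z) \<in> edges T ^^ k \<and> (b, z) \<in> edges T ^^ k" by blast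
  then have "\<exists>z. (a, z) \<in> edges T ^^ lca_height T a b \<and> (b, z) \<in> edges T ^^ lca_height T a b"
    unfolding lca_height_def by (rule LeastI_ex)
  with that show ?thesis by blast
qed

lemma HST_lca_height_mono:
  assumes "is_HST \<beta> T" "\<beta> > 1" "is_leaf T a" "is_leaf T b" "is_leaf T c"
    and "lca_height T a b \<le> lca_height T b c"
  shows "lca_height T a c \<le> lca_height T b c"
proof -
  obtain z where z: "(a, z) \<in> edges T ^^ lca_height T a b" "(b, z) \<in> edges T ^^ lca_height T a b"
    using HST_lca_height_ancestor[OF assms(1-4)] .
  obtain z' where z': "(b, z') \<in> edges T ^^ lca_height T b c" "(c, z') \<in> edges T ^^ lca_height T b c"
    using HST_lca_height_ancestor[OF assms(1,2,4,5)] .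
  have "(z, z') \<in> edges T ^^ (lca_height T b c - lca_height T a b)"
    using single_valued_relpow_factor[OF HST_single_valued[OF assms(1)] z(2) z'(1) assms(6)] .
  with z(1) have "(a, z') \<in> edges T ^^ (lca_height T a b + (lca_height T b c - lca_height T a b))"
    unfolding relpow_add by blast
  with assms(6) have "(a, z') \<in> edges T ^^ lca_height T b c" by simp
  then show ?thesis using z'(2) by (rule lca_height_le)
qed

lemma HST_lca_height_pseudo_ultrametric:
  assumes "is_HST \<beta> T" "\<beta> > 1"
  shows "pseudo_ultrametric_on {v. is_leaf T v} (lca_height T)"
  unfolding pseudo_ultrametric_on_def
proof (intro conjI ballI)
  fix a b c assume "a \<in> {v. is_leaf T v}" "b \<in> {v. is_leaf T v}" "c \<in> {v. is_leaf T v}"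
  then have leaves: "is_leaf T a" "is_leaf T b" "is_leaf T c" by simp_all
  show "lca_height T a c \<le> max (lca_height T a b) (lca_height T b c)"
  proof (cases "lca_height T a b \<le> lca_height T b c")
    case True
    then show ?thesis using HST_lca_height_mono[OF assms leaves] by simp
  next
    case False
    then show ?thesis
      using HST_lca_height_mono[OF assms leaves(3,2,1)] by (simp add: lca_height_commute)
  qed
qed (simp_all add: lca_height_commute)

lemma HST_dist_eq:
  assumes "is_HST \<beta> T" "\<beta> > 1" "is_leaf T a" "is_leaf T b"
  shows "hst_dist T a b = \<beta> ^ lca_height T a b / \<beta>"
proof -
  obtain z where z: "(a, z) \<in> edges T ^^ lca_height T a b" "(b, z) \<in> edges T ^^ lca_height T a b"
    using HST_lca_height_ancestor[OF assms] .
  have lca: "is_lca T a b z"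
    unfolding is_lca_def
  proof (intro conjI allI impI)
    show "(a, z) \<in> (edges T)\<^sup>*" "(b, z) \<in> (edges T)\<^sup>*" using z by (simp_all add: relpow_imp_rtrancl)
    fix w assume "(a, w) \<in> (edges T)\<^sup>* \<and> (b, w) \<in> (edges T)\<^sup>*"
    then obtain p q where pq: "(a, w) \<in> edges T ^^ p" "(b, w) \<in> edges T ^^ q" by (meson rtrancl_power)
    moreover have "p = q" using HST_leaf_depth_unique[OF assms pq] .
    ultimately have "lca_height T a b \<le> p" by (blast intro: lca_height_le)
    with single_valued_relpow_factor[OF HST_single_valued[OF assms(1)] z(1) pq(1)]
    show "(z, w) \<in> (edges T)\<^sup>*" by (simp add: relpow_imp_rtrancl)
  qed
  have "(THE z. is_lca T a b z) = z"
  proof (rule the_equality[where P = "is_lca T a b", OF lca])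
    fix z' assume "is_lca T a b z'"
    with lca have "(a, z) \<in> (edges T)\<^sup>*" "(z, z') \<in> (edges T)\<^sup>*" "(z', z) \<in> (edges T)\<^sup>*"
      unfolding is_lca_def by blast+
    then have "z = z'" by (rule HST_leaf_ancestors_antisym[OF assms(1-3)])
    then show "z' = z" ..
  qed
  moreover have "eta T a = 1 / \<beta>" using assms(1,3) unfolding is_HST_def by simp
  ultimately show ?thesis unfolding hst_dist_def using HST_eta_relpow[OF assms(1) z(1)] by simp
qed

lemma HST_leaf_map_pseudo_ultrametric:
  assumes "is_HST \<beta> T" "\<beta> > 1" "\<forall>x\<in>Z. is_leaf T (\<alpha> x)"
  shows "pseudo_ultrametric_on Z (\<lambda>x y. lca_height T (\<alpha> x) (\<alpha> y))"
  using HST_lca_height_pseudo_ultrametric[OF assms(1,2)] by (rule pseudo_ultrametric_on_compose) (use assms(3) in auto)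

lemma HST_leaf_map_dist:
  assumes "is_HST \<beta> T" "\<beta> > 1" "\<forall>x\<in>Z. is_leaf T (\<alpha> x)" "x \<in> Z" "y \<in> Z"
  shows "d_map T \<alpha> x y = \<beta> ^ lca_height T (\<alpha> x) (\<alpha> y) / \<beta>"
  using HST_dist_eq[OF assms(1,2)] assms(3-5) unfolding d_map_def by blast

section \<open>Realising a finite pseudo-ultrametric by a \<open>\<beta>\<close>-HST\<close>

locale level_tree =
  fixes Z :: "'a set" and L :: "'a \<Rightarrow> 'a \<Rightarrow> nat" and code :: "'a \<Rightarrow> nat"
  assumes finite_Z: "finite Z" and Z_nonempty: "Z \<noteq> {}"
    and pseudo_ultrametric: "pseudo_ultrametric_on Z L"
    and inj_code: "inj_on code Z"
begin

definition top_level :: nat where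
  "top_level = Max (case_prod L ` (Z \<times> Z))"

text \<open>The ball \<open>{y \<in> Z. L x y \<le> k}\<close> is named by \<open>cluster k x\<close>, the least code of its points;
  \<open>node k x\<close> pairs this name with the level \<open>k\<close>, encoded as a single natural number.\<close>

definition cluster :: "nat \<Rightarrow> 'a \<Rightarrow> nat" where
  "cluster k x = (LEAST m. \<exists>y\<in>Z. code y = m \<and> L x y \<le> k)"

definition node :: "nat \<Rightarrow> 'a \<Rightarrow> nat" where
  "node k x = prod_encode (k, cluster k x)"

definition tree :: "real \<Rightarrow> nat hst" where
  "tree \<beta> =
     \<lparr>nodes = (\<lambda>(k, x). node k x) ` ({..top_level} \<times> Z),
      edges = (\<lambda>(k, x). (node k x, node (Suc k) x)) ` ({..<top_level} \<times> Z),
      root = node top_level (SOME x. x \<in> Z),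
      eta = (\<lambda>v. \<beta> ^ fst (prod_decode v) / \<beta>)\<rparr>"

lemma L_le_top_level: "x \<in> Z \<Longrightarrow> y \<in> Z \<Longrightarrow> L x y \<le> top_level"
  unfolding top_level_def using finite_Z by (intro Max_ge) auto

lemma L_commute: "x \<in> Z \<Longrightarrow> y \<in> Z \<Longrightarrow> L x y = L y x"
  using pseudo_ultrametric unfolding pseudo_ultrametric_on_def by blast

lemma cluster_witness:
  assumes "x \<in> Z"
  obtains y where "y \<in> Z" "code y = cluster k x" "L x y \<le> k"
proof -
  have "\<exists>y\<in>Z. code y = code x \<and> L x y \<le> k"
    using assms pseudo_ultrametric unfolding pseudo_ultrametric_on_def by auto
  then have "\<exists>y\<in>Z. code y = cluster k x \<and> L x y \<le> k"
    unfolding cluster_def by (rule LeastI[where P = "\<lambda>m. \<exists>y\<in>Z. code y = m \<and> L x y \<le> k"])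
  with that show ?thesis by blast
qed

lemma cluster_eq_iff:
  assumes "x \<in> Z" "y \<in> Z"
  shows "cluster k x = cluster k y \<longleftrightarrow> L x y \<le> k"
proof
  assume "L x y \<le> k"
  with assms have "L x z \<le> k \<longleftrightarrow> L y z \<le> k" if "z \<in> Z" for z
    using pseudo_ultrametric_on_le_trans[OF pseudo_ultrametric] L_commute that by metis
  then show "cluster k x = cluster k y"
    unfolding cluster_def by metis
next
  assume "cluster k x = cluster k y"
  moreover obtain z where "z \<in> Z" "code z = cluster k x" "L x z \<le> k"
    using cluster_witness[OF assms(1)] .
  moreover obtain z' where "z' \<in> Z" "code z' = cluster k y" "L y z' \<le> k"
    using cluster_witness[OF assms(2)] .
  ultimately have "z = z'"
    using inj_onD[OF inj_code] by metis
  with assms \<open>z \<in> Z\<close> \<open>L x z \<le> k\<close> \<open>L y z' \<le> k\<close> show "L x y \<le> k"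
    using pseudo_ultrametric_on_le_trans[OF pseudo_ultrametric] L_commute by metis
qed

lemma node_eq_iff: "x \<in> Z \<Longrightarrow> y \<in> Z \<Longrightarrow> node k x = node k' y \<longleftrightarrow> k = k' \<and> L x y \<le> k"
  unfolding node_def using cluster_eq_iff by auto

lemma level_node [simp]: "fst (prod_decode (node k x)) = k"
  by (simp add: node_def)

lemma nodes_tree: "v \<in> nodes (tree \<beta>) \<longleftrightarrow> (\<exists>k x. k \<le> top_level \<and> x \<in> Z \<and> v = node k x)"
  unfolding tree_def by auto

lemma edges_tree:
  "(v, w) \<in> edges (tree \<beta>) \<longleftrightarrow> (\<exists>k x. k < top_level \<and> x \<in> Z \<and> v = node k x \<and> w = node (Suc k) x)"
  unfolding tree_def by auto

lemma root_tree: "x \<in> Z \<Longrightarrow> root (tree \<beta>) = node top_level x"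
  unfolding tree_def using Z_nonempty node_eq_iff L_le_top_level by (simp add: some_in_eq)

lemma eta_tree: "eta (tree \<beta>) v = \<beta> ^ fst (prod_decode v) / \<beta>"
  unfolding tree_def by simp

lemma node_in_tree: "k \<le> top_level \<Longrightarrow> x \<in> Z \<Longrightarrow> node k x \<in> nodes (tree \<beta>)"
  unfolding nodes_tree by blast

lemma node_edge_tree: "k < top_level \<Longrightarrow> x \<in> Z \<Longrightarrow> (node k x, node (Suc k) x) \<in> edges (tree \<beta>)"
  unfolding edges_tree by blast

lemma tree_edge_from_node:
  assumes "x \<in> Z" "(node k x, w) \<in> edges (tree \<beta>)"
  shows "k < top_level \<and> w = node (Suc k) x"
proof -
  obtain k' y where "k' < top_level" "y \<in> Z" "node k x = node k' y" "w = node (Suc k') y"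
    using assms(2) edges_tree by blast
  moreover from this assms(1) have "k = k'" "L x y \<le> k" using node_eq_iff by auto
  moreover from calculation assms(1) have "node (Suc k) x = node (Suc k') y"
    using node_eq_iff by simp
  ultimately show ?thesis by simp
qed

lemma single_valued_tree: "single_valued (edges (tree \<beta>))"
proof (rule single_valuedI)
  fix v w w' assume "(v, w) \<in> edges (tree \<beta>)" "(v, w') \<in> edges (tree \<beta>)"
  moreover from this obtain k x where "x \<in> Z" "v = node k x" unfolding edges_tree by blast
  ultimately show "w = w'" using tree_edge_from_node by blast
qed

lemma tree_relpow_from_leaf:
  assumes "x \<in> Z"
  shows "(node 0 x, w) \<in> edges (tree \<beta>) ^^ k \<longleftrightarrow> k \<le> top_level \<and> w = node k x"
proof (induction k arbitrary: w)
  case (Suc k)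
  show ?case
  proof
    assume "(node 0 x, w) \<in> edges (tree \<beta>) ^^ Suc k"
    then obtain v where "(node 0 x, v) \<in> edges (tree \<beta>) ^^ k" "(v, w) \<in> edges (tree \<beta>)"
      by (rule relpow_Suc_E)
    with Suc.IH tree_edge_from_node[OF assms] show "Suc k \<le> top_level \<and> w = node (Suc k) x"
      by (simp add: Suc_le_eq)
  next
    assume "Suc k \<le> top_level \<and> w = node (Suc k) x"
    with Suc.IH assms have "(node 0 x, node k x) \<in> edges (tree \<beta>) ^^ k" "(node k x, w) \<in> edges (tree \<beta>)"
      by (simp_all add: node_edge_tree Suc_le_eq)
    then show "(node 0 x, w) \<in> edges (tree \<beta>) ^^ Suc k" by (rule relpow_Suc_I)
  qed
qed auto

lemma tree_reaches_root:
  assumes "v \<in> nodes (tree \<beta>)"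
  shows "(v, root (tree \<beta>)) \<in> (edges (tree \<beta>))\<^sup>*"
proof -
  obtain k x where "k \<le> top_level" "x \<in> Z" "v = node k x"
    using assms nodes_tree by blast
  then have "(node 0 x, v) \<in> edges (tree \<beta>) ^^ k"
    "(node 0 x, root (tree \<beta>)) \<in> edges (tree \<beta>) ^^ top_level"
    using tree_relpow_from_leaf root_tree by simp_all
  with \<open>k \<le> top_level\<close> have "(v, root (tree \<beta>)) \<in> edges (tree \<beta>) ^^ (top_level - k)"
    using single_valued_relpow_factor[OF single_valued_tree] by blast
  then show ?thesis by (rule relpow_imp_rtrancl)
qed

lemma rooted_tree_tree: "rooted_tree (nodes (tree \<beta>)) (edges (tree \<beta>)) (root (tree \<beta>))"
  unfolding rooted_tree_def
proof (intro conjI ballI allI impI tree_reaches_root)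
  obtain c where c: "c \<in> Z" using Z_nonempty by blast
  show "finite (nodes (tree \<beta>))" unfolding tree_def using finite_Z by simp
  show "root (tree \<beta>) \<in> nodes (tree \<beta>)" using c root_tree node_in_tree by simp
  show "edges (tree \<beta>) \<subseteq> nodes (tree \<beta>) \<times> nodes (tree \<beta>)"
  proof (rule subrelI)
    fix v w assume "(v, w) \<in> edges (tree \<beta>)"
    then obtain k x where "k < top_level" "x \<in> Z" "v = node k x" "w = node (Suc k) x"
      unfolding edges_tree by blast
    then show "(v, w) \<in> nodes (tree \<beta>) \<times> nodes (tree \<beta>)" by (simp add: node_in_tree)
  qed
  show "(root (tree \<beta>), w) \<notin> edges (tree \<beta>)" for w
    using tree_edge_from_node[OF c, of top_level w \<beta>] root_tree[OF c] by auto
  fix v assume v: "v \<in> nodes (tree \<beta>)" "v \<noteq> root (tree \<beta>)"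
  then obtain k x where "k \<le> top_level" "x \<in> Z" "v = node k x"
    unfolding nodes_tree by blast
  moreover from calculation v(2) have "k < top_level"
    using root_tree le_neq_implies_less by metis
  ultimately show "\<exists>!w. (v, w) \<in> edges (tree \<beta>)"
    using node_edge_tree tree_edge_from_node by (metis ex1I)
qed

lemma leaf_tree_iff: "is_leaf (tree \<beta>) v \<longleftrightarrow> (\<exists>x\<in>Z. v = node 0 x)"
proof
  assume leaf: "is_leaf (tree \<beta>) v"
  then obtain k x where "k \<le> top_level" "x \<in> Z" "v = node k x"
    unfolding is_leaf_def nodes_tree by blast
  moreover have "k = 0"
  proof (rule ccontr)
    assume "k \<noteq> 0"
    then obtain j where "k = Suc j" using not0_implies_Suc by blast
    with \<open>k \<le> top_level\<close> \<open>x \<in> Z\<close> have "(node j x, v) \<in> edges (tree \<beta>)"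
      using \<open>v = node k x\<close> node_edge_tree by simp
    with leaf show False unfolding is_leaf_def by blast
  qed
  ultimately show "\<exists>x\<in>Z. v = node 0 x" by blast
next
  assume "\<exists>x\<in>Z. v = node 0 x"
  then obtain x where "x \<in> Z" "v = node 0 x" by blast
  moreover have "(w, node 0 x) \<notin> edges (tree \<beta>)" for w
  proof
    assume "(w, node 0 x) \<in> edges (tree \<beta>)"
    then obtain k y where "node 0 x = node (Suc k) y" unfolding edges_tree by blast
    then show False using level_node by (metis nat.distinct(1))
  qed
  ultimately show "is_leaf (tree \<beta>) v" unfolding is_leaf_def by (simp add: node_in_tree)
qed

lemma is_HST_tree: "is_HST \<beta> (tree \<beta>)"
  unfolding is_HST_def
proof (intro conjI allI impI rooted_tree_tree)
  show "eta (tree \<beta>) w = \<beta> * eta (tree \<beta>) v" if "(v, w) \<in> edges (tree \<beta>)" for v w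
    using that unfolding edges_tree eta_tree by auto
  show "eta (tree \<beta>) v = 1 / \<beta>" if "is_leaf (tree \<beta>) v" for v
    using that unfolding leaf_tree_iff eta_tree by auto
qed

lemma lca_height_tree:
  assumes "x \<in> Z" "y \<in> Z"
  shows "lca_height (tree \<beta>) (node 0 x) (node 0 y) = L x y"
  unfolding lca_height_def
proof (rule Least_equality)
  show "\<exists>z. (node 0 x, z) \<in> edges (tree \<beta>) ^^ L x y \<and> (node 0 y, z) \<in> edges (tree \<beta>) ^^ L x y"
    using assms by (simp add: tree_relpow_from_leaf L_le_top_level node_eq_iff)
  show "L x y \<le> k"
    if "\<exists>z. (node 0 x, z) \<in> edges (tree \<beta>) ^^ k \<and> (node 0 y, z) \<in> edges (tree \<beta>) ^^ k" for k
    using that assms by (auto simp: tree_relpow_from_leaf node_eq_iff)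
qed

end

theorem pseudo_ultrametric_HST_realization:
  fixes L :: "'a \<Rightarrow> 'a \<Rightarrow> nat"
  assumes "finite Z" "Z \<noteq> {}" "pseudo_ultrametric_on Z L" "\<beta> > 1"
  obtains T :: "nat hst" and \<alpha> where "is_HST \<beta> T" "\<forall>x\<in>Z. is_leaf T (\<alpha> x)"
    "\<forall>x\<in>Z. \<forall>y\<in>Z. d_map T \<alpha> x y = \<beta> ^ L x y / \<beta>"
proof -
  obtain code :: "'a \<Rightarrow> nat" where "inj_on code Z"
    using finite_imp_inj_to_nat_seg[OF assms(1)] by blast
  with assms interpret level_tree Z L code by unfold_locales
  have leaves: "\<forall>x\<in>Z. is_leaf (tree \<beta>) (node 0 x)" by (auto simp: leaf_tree_iff)
  show ?thesis
  proof (rule that[OF is_HST_tree leaves], intro ballI)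
    fix x y assume "x \<in> Z" "y \<in> Z"
    then show "d_map (tree \<beta>) (node 0) x y = \<beta> ^ L x y / \<beta>"
      using HST_leaf_map_dist[OF is_HST_tree assms(4) leaves] by (simp add: lca_height_tree)
  qed
qed

theorem mainTheorem6:
  fixes \<beta> :: real and Z1 Z2 :: "'a set" and u :: 'a
    and T1 :: "'v hst" and T2 :: "'w hst"
    and \<alpha>1 :: "'a \<Rightarrow> 'v" and \<alpha>2 :: "'a \<Rightarrow> 'w"
  assumes "\<beta> \<ge> 2"
    and "finite Z1" and "finite Z2" and "Z1 \<inter> Z2 = {u}"
    and "is_HST \<beta> T1" and "is_HST \<beta> T2"
    and "\<forall>x\<in>Z1. is_leaf T1 (\<alpha>1 x)"
    and "\<forall>x\<in>Z2. is_leaf T2 (\<alpha>2 x)"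
  shows "\<exists>(T :: nat hst) (\<alpha> :: 'a \<Rightarrow> nat).
           is_HST \<beta> T \<and> (\<forall>x\<in>Z1 \<union> Z2. is_leaf T (\<alpha> x)) \<and>
           (\<forall>x\<in>Z1. \<forall>y\<in>Z1. d_map T \<alpha> x y = d_map T1 \<alpha>1 x y) \<and>
           (\<forall>x\<in>Z2. \<forall>y\<in>Z2. d_map T \<alpha> x y = d_map T2 \<alpha>2 x y) \<and>
           (\<forall>x\<in>Z1. \<forall>y\<in>Z2. d_map T \<alpha> x y \<ge> max (d_map T1 \<alpha>1 x u) (d_map T2 \<alpha>2 u y))"
proof -
  have \<beta>: "\<beta> > 1" using assms(1) by simp
  define L1 where "L1 x y = lca_height T1 (\<alpha>1 x) (\<alpha>1 y)" for x y
  define L2 where "L2 x y = lca_height T2 (\<alpha>2 x) (\<alpha>2 y)" for x y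
  have pu1: "pseudo_ultrametric_on Z1 L1" and pu2: "pseudo_ultrametric_on Z2 L2"
    unfolding L1_def L2_def using HST_leaf_map_pseudo_ultrametric \<beta> assms(5-8) by blast+
  let ?L = "glue_at Z1 L1 Z2 L2 u"
  have "finite (Z1 \<union> Z2)" "Z1 \<union> Z2 \<noteq> {}" using assms(2-4) by auto
  then obtain T :: "nat hst" and \<alpha> where T: "is_HST \<beta> T" "\<forall>x\<in>Z1 \<union> Z2. is_leaf T (\<alpha> x)"
    and dist: "\<forall>x\<in>Z1 \<union> Z2. \<forall>y\<in>Z1 \<union> Z2. d_map T \<alpha> x y = \<beta> ^ ?L x y / \<beta>"
    by (rule pseudo_ultrametric_HST_realization[OF _ _ pseudo_ultrametric_on_glue_at[OF pu1 pu2 assms(4)] \<beta>])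
  have dist1: "d_map T1 \<alpha>1 x y = \<beta> ^ L1 x y / \<beta>" if "x \<in> Z1" "y \<in> Z1" for x y
    unfolding L1_def using HST_leaf_map_dist[OF assms(5) \<beta> assms(7) that] .
  have dist2: "d_map T2 \<alpha>2 x y = \<beta> ^ L2 x y / \<beta>" if "x \<in> Z2" "y \<in> Z2" for x y
    unfolding L2_def using HST_leaf_map_dist[OF assms(6) \<beta> assms(8) that] .
  have mono: "\<beta> ^ m / \<beta> \<le> \<beta> ^ n / \<beta>" if "m \<le> n" for m n
    using \<beta> that by (intro divide_right_mono power_increasing) auto
  have "u \<in> Z1" "u \<in> Z2" using assms(4) by auto
  have "d_map T \<alpha> x y = d_map T1 \<alpha>1 x y" if "x \<in> Z1" "y \<in> Z1" for x y
    using that dist dist1 glue_at_left[OF pu1 pu2 assms(4)] by simp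
  moreover have "d_map T \<alpha> x y = d_map T2 \<alpha>2 x y" if "x \<in> Z2" "y \<in> Z2" for x y
    using that dist dist2 glue_at_right[OF pu1 pu2 assms(4)] by simp
  moreover have "max (d_map T1 \<alpha>1 x u) (d_map T2 \<alpha>2 u y) \<le> d_map T \<alpha> x y" if "x \<in> Z1" "y \<in> Z2" for x y
    using that \<open>u \<in> Z1\<close> \<open>u \<in> Z2\<close> dist dist1 dist2 glue_at_cross[OF pu1 pu2 assms(4)] by (simp add: mono)
  ultimately show ?thesis using T by blast
qed

end
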